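(* Let $M$ be a module over a commutative ring $A$, and let $A\oplus M$ be the idealization of $M$. Then $\mathfrak{C}(A,A\oplus M)=0$, where $A$ is regarded as a subring of $A\oplus M$ via $a\mapsto(a,0)$.
   Context: The idealization $A\oplus M$ is the ring with underlying group $A\oplus M$ and multiplication $(a,m)(a',m')=(aa',am'+a'm)$. For an extension of rings $A\subseteq B$ and $A$-submodules $L,L'$ of $B$, $LL'$ is the $A$-submodule of finite sums $\sum x_ky_k$. An $A$-submodule $L$ of $B$ is an invertible ideal of $A\subseteq B$ if $LL'=A$ for some $A$-submodule $L'$ of $B$; these form an abelian group $\mathscr{G}(A,B)$ and $\mathfrak{C}(A,B)=\mathscr{G}(A,B)/\{Ax: x\in B^\ast\}$. *)

theory Defs
  imports Main "HOL.Modules"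
begin

text \<open>Idealization A (+) M of an A-module M (scalar multiplication scale),
  with carrier 'a \<times> 'b. Addition is componentwise.\<close>

definition idz_add :: "'a::comm_ring_1 \<times> 'b::ab_group_add \<Rightarrow> 'a \<times> 'b \<Rightarrow> 'a \<times> 'b" where
  "idz_add x y = (fst x + fst y, snd x + snd y)"

definition idz_zero :: "'a::comm_ring_1 \<times> 'b::ab_group_add" where
  "idz_zero = (0, 0)"

definition idz_one :: "'a::comm_ring_1 \<times> 'b::ab_group_add" where
  "idz_one = (1, 0)"

definition idz_mult :: "('a::comm_ring_1 \<Rightarrow> 'b::ab_group_add \<Rightarrow> 'b)
    \<Rightarrow> 'a \<times> 'b \<Rightarrow> 'a \<times> 'b \<Rightarrow> 'a \<times> 'b" where
  "idz_mult scale x y = (fst x * fst y, scale (fst x) (snd y) + scale (fst y) (snd x))"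

definition idz_sum :: "(nat \<Rightarrow> 'a::comm_ring_1 \<times> 'b::ab_group_add) \<Rightarrow> nat \<Rightarrow> 'a \<times> 'b" where
  "idz_sum f n = ((\<Sum>i<n. fst (f i)), (\<Sum>i<n. snd (f i)))"

definition idz_unit :: "('a::comm_ring_1 \<Rightarrow> 'b::ab_group_add \<Rightarrow> 'b) \<Rightarrow> 'a \<times> 'b \<Rightarrow> bool" where
  "idz_unit scale x \<longleftrightarrow> (\<exists>y. idz_mult scale x y = idz_one)"

definition idz_base :: "('a::comm_ring_1 \<times> 'b::ab_group_add) set" where
  "idz_base = {(a, 0) | a. True}"

definition idz_submodule :: "('a::comm_ring_1 \<Rightarrow> 'b::ab_group_add \<Rightarrow> 'b) \<Rightarrow> ('a \<times> 'b) set \<Rightarrow> bool" where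
  "idz_submodule scale L \<longleftrightarrow>
     idz_zero \<in> L \<and>
     (\<forall>x\<in>L. \<forall>y\<in>L. idz_add x y \<in> L) \<and>
     (\<forall>a. \<forall>x\<in>L. idz_mult scale (a, 0) x \<in> L)"

definition idz_prod :: "('a::comm_ring_1 \<Rightarrow> 'b::ab_group_add \<Rightarrow> 'b)
    \<Rightarrow> ('a \<times> 'b) set \<Rightarrow> ('a \<times> 'b) set \<Rightarrow> ('a \<times> 'b) set" where
  "idz_prod scale L L' = {z. \<exists>n f g. (\<forall>i<n. f i \<in> L \<and> g i \<in> L') \<and>
       z = idz_sum (\<lambda>i. idz_mult scale (f i) (g i)) n}"

definition idz_invertible :: "('a::comm_ring_1 \<Rightarrow> 'b::ab_group_add \<Rightarrow> 'b) \<Rightarrow> ('a \<times> 'b) set \<Rightarrow> bool" where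
  "idz_invertible scale L \<longleftrightarrow> idz_submodule scale L \<and>
     (\<exists>L'. idz_submodule scale L' \<and> idz_prod scale L L' = idz_base)"

definition idz_principal :: "('a::comm_ring_1 \<Rightarrow> 'b::ab_group_add \<Rightarrow> 'b) \<Rightarrow> 'a \<times> 'b \<Rightarrow> ('a \<times> 'b) set" where
  "idz_principal scale x = {idz_mult scale (a, 0) x | a. True}"

end

theory Submission
  imports Defs
begin

text \<open>
  Write \<open>u = (a(u), m(u))\<close> for \<open>u \<in> A \<oplus> M\<close>. If \<open>LL' = A\<close>, then \<open>(1,0) = \<Sum> f\<^sub>i g\<^sub>i\<close>
  with \<open>f\<^sub>i \<in> L\<close>, \<open>g\<^sub>i \<in> L'\<close>, and the element \<open>x = \<Sum> a(g\<^sub>i) f\<^sub>i\<close> of \<open>L\<close> has first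
  component \<open>1\<close>, hence is a unit. For \<open>z \<in> L\<close> each \<open>z g\<^sub>i\<close> lies in \<open>A\<close>, i.e.
  \<open>a(g\<^sub>i) m(z) = - a(z) m(g\<^sub>i)\<close>; multiplying by \<open>a(f\<^sub>i)\<close>, summing, and using the
  \<open>M\<close>-component of \<open>(1,0) = \<Sum> f\<^sub>i g\<^sub>i\<close> gives \<open>m(z) = a(z) m(x)\<close>, i.e. \<open>z = (a(z),0) x\<close>.
  So \<open>L = Ax\<close>. Conversely, if \<open>xy = 1\<close> then \<open>(Ax)(Ay) = A(xy) = A\<close>.
\<close>

definition idz_lincomb ::
    "('a::comm_ring_1 \<Rightarrow> 'b::ab_group_add \<Rightarrow> 'b) \<Rightarrow> (nat \<Rightarrow> 'a) \<Rightarrow> (nat \<Rightarrow> 'a \<times> 'b) \<Rightarrow> nat \<Rightarrow> 'a \<times> 'b"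
  where "idz_lincomb scale c f n = idz_sum (\<lambda>i. idz_mult scale (c i, 0) (f i)) n"

lemma mem_idz_base_iff: "x \<in> idz_base \<longleftrightarrow> snd x = 0"
  by (cases x) (auto simp: idz_base_def)

lemma idz_mult_mem_prod:
  assumes "x \<in> L" "y \<in> L'"
  shows "idz_mult scale x y \<in> idz_prod scale L L'"
  unfolding idz_prod_def
  using assms by (intro CollectI exI[of _ 1] exI[of _ "\<lambda>_. x"] exI[of _ "\<lambda>_. y"]) (simp add: idz_sum_def)

context module
begin

lemma idz_mult_base: "idz_mult scale (a, 0) x = (a * fst x, a *s snd x)"
  by (simp add: idz_mult_def)

lemma idz_lincomb_eq: "idz_lincomb scale c f n = (\<Sum>i<n. c i * fst (f i), \<Sum>i<n. c i *s snd (f i))"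
  by (simp add: idz_lincomb_def idz_sum_def idz_mult_base)

lemma idz_mult_base_mult_base:
  "idz_mult scale (idz_mult scale (a, 0) x) (idz_mult scale (b, 0) y) = idz_mult scale (a * b, 0) (idz_mult scale x y)"
  by (simp add: idz_mult_def algebra_simps)

lemma idz_submodule_sum_mem:
  assumes L: "idz_submodule scale L" and h: "\<And>i. i < n \<Longrightarrow> h i \<in> L"
  shows "idz_sum h n \<in> L"
  using h
proof (induction n)
  case 0
  then show ?case using L by (simp add: idz_submodule_def idz_sum_def idz_zero_def)
next
  case (Suc n)
  then have "idz_add (idz_sum h n) (h n) \<in> L"
    using L by (simp add: idz_submodule_def)
  then show ?case by (simp add: idz_sum_def idz_add_def)
qed

lemma idz_submodule_lincomb_mem:
  assumes L: "idz_submodule scale L" and f: "\<And>i. i < n \<Longrightarrow> f i \<in> L"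
  shows "idz_lincomb scale c f n \<in> L"
  unfolding idz_lincomb_def
  using L f by (intro idz_submodule_sum_mem) (auto simp: idz_submodule_def)

lemma idz_submodule_principal: "idz_submodule scale (idz_principal scale x)"
  unfolding idz_submodule_def
proof (intro conjI ballI allI)
  show "idz_zero \<in> idz_principal scale x"
    unfolding idz_principal_def idz_zero_def by (auto simp: idz_mult_base intro: exI[of _ 0])
next
  fix y z assume "y \<in> idz_principal scale x" "z \<in> idz_principal scale x"
  then obtain a b where "y = idz_mult scale (a, 0) x" "z = idz_mult scale (b, 0) x"
    by (auto simp: idz_principal_def)
  then have "idz_add y z = idz_mult scale (a + b, 0) x"
    by (simp add: idz_mult_base idz_add_def algebra_simps)
  then show "idz_add y z \<in> idz_principal scale x"
    by (auto simp: idz_principal_def)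
next
  fix c y assume "y \<in> idz_principal scale x"
  then obtain a where "y = idz_mult scale (a, 0) x"
    by (auto simp: idz_principal_def)
  then have "idz_mult scale (c, 0) y = idz_mult scale (c * a, 0) x"
    by (simp add: idz_mult_base mult.assoc)
  then show "idz_mult scale (c, 0) y \<in> idz_principal scale x"
    by (auto simp: idz_principal_def)
qed

lemma idz_principal_one: "idz_principal scale idz_one = idz_base"
  by (auto simp: idz_principal_def idz_base_def idz_one_def idz_mult_base)

lemma idz_prod_principal:
  "idz_prod scale (idz_principal scale x) (idz_principal scale y) = idz_principal scale (idz_mult scale x y)"
proof
  show "idz_prod scale (idz_principal scale x) (idz_principal scale y) \<subseteq> idz_principal scale (idz_mult scale x y)"
  proof
    fix z assume "z \<in> idz_prod scale (idz_principal scale x) (idz_principal scale y)"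
    then obtain n f g where fg: "\<forall>i<n. f i \<in> idz_principal scale x \<and> g i \<in> idz_principal scale y"
      and z: "z = idz_sum (\<lambda>i. idz_mult scale (f i) (g i)) n"
      by (auto simp: idz_prod_def)
    have "idz_mult scale (f i) (g i) \<in> idz_principal scale (idz_mult scale x y)" if "i < n" for i
    proof -
      obtain a b where "f i = idz_mult scale (a, 0) x" "g i = idz_mult scale (b, 0) y"
        using fg \<open>i < n\<close> by (auto simp: idz_principal_def)
      then show ?thesis
        by (auto simp: idz_principal_def idz_mult_base_mult_base)
    qed
    then show "z \<in> idz_principal scale (idz_mult scale x y)"
      unfolding z by (rule idz_submodule_sum_mem[OF idz_submodule_principal])
  qed
next
  show "idz_principal scale (idz_mult scale x y) \<subseteq> idz_prod scale (idz_principal scale x) (idz_principal scale y)"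
  proof
    fix z assume "z \<in> idz_principal scale (idz_mult scale x y)"
    then obtain a where "z = idz_mult scale (a * 1, 0) (idz_mult scale x y)"
      by (auto simp: idz_principal_def)
    then have "z = idz_mult scale (idz_mult scale (a, 0) x) (idz_mult scale (1, 0) y)"
      by (simp only: idz_mult_base_mult_base)
    then show "z \<in> idz_prod scale (idz_principal scale x) (idz_principal scale y)"
      by (auto simp: idz_principal_def intro!: idz_mult_mem_prod)
  qed
qed

lemma idz_invertible_principal_unit:
  assumes "idz_unit scale x"
  shows "idz_invertible scale (idz_principal scale x)"
proof -
  obtain y where "idz_mult scale x y = idz_one"
    using assms by (auto simp: idz_unit_def)
  then have "idz_prod scale (idz_principal scale x) (idz_principal scale y) = idz_base"
    by (simp add: idz_prod_principal idz_principal_one)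
  then show ?thesis
    unfolding idz_invertible_def using idz_submodule_principal by blast
qed

lemma idz_unit_fst_one: "fst x = 1 \<Longrightarrow> idz_unit scale x"
  unfolding idz_unit_def idz_one_def
  by (intro exI[of _ "(1, - snd x)"]) (simp add: idz_mult_def)

lemma idz_eq_mult_dual_lincomb:
  assumes one: "idz_sum (\<lambda>i. idz_mult scale (f i) (g i)) n = idz_one"
    and orth: "\<And>i. i < n \<Longrightarrow> idz_mult scale z (g i) \<in> idz_base"
  shows "z = idz_mult scale (fst z, 0) (idz_lincomb scale (\<lambda>i. fst (g i)) f n)"
proof -
  obtain a m where z: "z = (a, m)" by (cases z)
  have fst_one: "(\<Sum>i<n. fst (f i) * fst (g i)) = 1"
    and snd_one: "(\<Sum>i<n. fst (f i) *s snd (g i)) = - (\<Sum>i<n. fst (g i) *s snd (f i))"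
    using one by (simp_all add: idz_sum_def idz_mult_def idz_one_def sum.distrib eq_neg_iff_add_eq_0)
  have gm: "fst (g i) *s m = - (a *s snd (g i))" if "i < n" for i
    using orth[OF that] by (simp add: z mem_idz_base_iff idz_mult_def eq_neg_iff_add_eq_0 add.commute)
  have "m = (\<Sum>i<n. fst (f i) * fst (g i)) *s m"
    using fst_one by simp
  also have "\<dots> = (\<Sum>i<n. fst (f i) *s (fst (g i) *s m))"
    by (simp add: scale_sum_left)
  also have "\<dots> = (\<Sum>i<n. - (a *s (fst (f i) *s snd (g i))))"
    by (rule sum.cong) (simp_all add: gm mult.commute)
  also have "\<dots> = - (a *s (\<Sum>i<n. fst (f i) *s snd (g i)))"
    by (simp only: sum_negf scale_sum_right)
  also have "\<dots> = a *s (\<Sum>i<n. fst (g i) *s snd (f i))"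
    by (simp add: snd_one)
  finally show ?thesis
    using fst_one by (simp add: z idz_mult_base idz_lincomb_eq mult.commute)
qed

lemma idz_invertible_imp_principal_unit:
  assumes "idz_invertible scale L"
  obtains x where "idz_unit scale x" "L = idz_principal scale x"
proof -
  obtain L' where L: "idz_submodule scale L" and prod: "idz_prod scale L L' = idz_base"
    using assms by (auto simp: idz_invertible_def)
  have "idz_one \<in> idz_prod scale L L'"
    by (simp add: prod mem_idz_base_iff idz_one_def)
  then obtain n f g where fg: "\<forall>i<n. f i \<in> L \<and> g i \<in> L'"
    and one: "idz_sum (\<lambda>i. idz_mult scale (f i) (g i)) n = idz_one"
    by (auto simp: idz_prod_def)
  define x where "x = idz_lincomb scale (\<lambda>i. fst (g i)) f n"
  have "x \<in> L"
    using L fg by (simp add: x_def idz_submodule_lincomb_mem)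
  have "fst x = 1"
    using one by (simp add: x_def idz_lincomb_eq idz_sum_def idz_mult_def idz_one_def mult.commute)
  have "L = idz_principal scale x"
  proof
    show "idz_principal scale x \<subseteq> L"
      using \<open>x \<in> L\<close> L by (auto simp: idz_principal_def idz_submodule_def)
  next
    show "L \<subseteq> idz_principal scale x"
    proof
      fix z assume "z \<in> L"
      then have "idz_mult scale z (g i) \<in> idz_base" if "i < n" for i
        using fg that prod idz_mult_mem_prod by blast
      then have "z = idz_mult scale (fst z, 0) x"
        unfolding x_def using one by (rule idz_eq_mult_dual_lincomb[rotated])
      then show "z \<in> idz_principal scale x"
        by (auto simp: idz_principal_def)
    qed
  qed
  with \<open>fst x = 1\<close> show thesis
    by (intro that idz_unit_fst_one)
qed

end

theorem corollary5p12:
  fixes scale :: "'a::comm_ring_1 \<Rightarrow> 'b::ab_group_add \<Rightarrow> 'b"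
  assumes "module scale"
  shows "{L. idz_invertible scale L} = {idz_principal scale x | x. idz_unit scale x}"
proof (intro set_eqI iffI)
  fix L assume "L \<in> {L. idz_invertible scale L}"
  then obtain x where "idz_unit scale x" "L = idz_principal scale x"
    using module.idz_invertible_imp_principal_unit[OF assms] by blast
  then show "L \<in> {idz_principal scale x | x. idz_unit scale x}" by blast
next
  fix L assume "L \<in> {idz_principal scale x | x. idz_unit scale x}"
  then show "L \<in> {L. idz_invertible scale L}"
    using module.idz_invertible_principal_unit[OF assms] by blast
qed

end
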